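(* Let $f:\{0,1,\dots,N-1\}\to\{0,1\}$ and $t=|f^{-1}(1)|$. Let $\tilde t$ be any integer with $|\tilde t-t'|\le 2/3$, where $t'$ is the output of $\mathbf{Count}(f,\lceil\sqrt N\rceil)$. Then with probability at least $8/\pi^2$, $$|\tilde t-t|<2\pi\sqrt{\frac{t(N-t)}{N}}+11.$$
   Context: For $M\ge1$, $\mathbf F_M|x\rangle=\frac{1}{\sqrt M}\sum_{y=0}^{M-1}e^{2\pi ixy/M}|y\rangle$. For a unitary $\mathbf U$, $\Lambda_M(\mathbf U)$ is $|j\rangle|y\rangle\mapsto|j\rangle(\mathbf U^j|y\rangle)$, $0\le j<M$. Take $\mathcal H$ with basis $|0\rangle,\dots,|N-1\rangle$, $\mathcal A=\mathbf F_N$, $\mathbf S_f|x\rangle=(-1)^{f(x)}|x\rangle$, $\mathbf S_0$ negating $|0\rangle$ and fixing other basis states, and $\mathbf Q=-\mathcal A\mathbf S_0\mathcal A^{-1}\mathbf S_f$. $\mathbf{Count}(f,M)$: prepare $|0\rangle\otimes\mathcal A|0\rangle$ (first register $M$-dimensional); apply $\mathbf F_M$ to the first register; apply $\Lambda_M(\mathbf Q)$; apply $\mathbf F_M^{-1}$ to the first register; measure the first register obtaining $y$; output $t'=N\sin^2(\pi y/M)$. A call $\mathbf{Count}(f,M)$ is counted as $M$ evaluations of $f$. *)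

theory Defs
  imports Complex_Main
begin

text \<open>State vectors of a register of dimension d are functions nat => complex,
  only the entries at indices < d being meaningful (entries >= d are kept 0).
  Two-register states are functions nat => nat => complex: s j y is the amplitude
  of the basis state |j>|y>.\<close>

type_synonym vec = "nat \<Rightarrow> complex"
type_synonym vec2 = "nat \<Rightarrow> nat \<Rightarrow> complex"

definition QFT :: "nat \<Rightarrow> vec \<Rightarrow> vec" where
  "QFT M v = (\<lambda>y. if y < M then
      (\<Sum>x<M. complex_of_real (1 / sqrt (real M)) * cis (2 * pi * real x * real y / real M) * v x)
    else 0)"

definition QFT_inv :: "nat \<Rightarrow> vec \<Rightarrow> vec" where
  "QFT_inv M v = (\<lambda>y. if y < M then
      (\<Sum>x<M. complex_of_real (1 / sqrt (real M)) * cis (- 2 * pi * real x * real y / real M) * v x)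
    else 0)"

definition ket :: "nat \<Rightarrow> vec" where
  "ket k = (\<lambda>x. if x = k then 1 else 0)"

definition S_f :: "nat \<Rightarrow> (nat \<Rightarrow> nat) \<Rightarrow> vec \<Rightarrow> vec" where
  "S_f N f v = (\<lambda>x. if x < N then (-1) ^ f x * v x else 0)"

definition S_0 :: "nat \<Rightarrow> vec \<Rightarrow> vec" where
  "S_0 N v = (\<lambda>x. if x < N then (if x = 0 then - v x else v x) else 0)"

definition Qop :: "nat \<Rightarrow> (nat \<Rightarrow> nat) \<Rightarrow> vec \<Rightarrow> vec" where
  "Qop N f v = (\<lambda>x. - (QFT N (S_0 N (QFT_inv N (S_f N f v)))) x)"

definition count_init :: "nat \<Rightarrow> nat \<Rightarrow> vec2" where
  "count_init N M = (\<lambda>j y. if j = 0 then QFT N (ket 0) y else 0)"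

definition apply_first :: "(vec \<Rightarrow> vec) \<Rightarrow> vec2 \<Rightarrow> vec2" where
  "apply_first U s = (\<lambda>j y. U (\<lambda>j'. s j' y) j)"

definition Lambda :: "nat \<Rightarrow> (vec \<Rightarrow> vec) \<Rightarrow> vec2 \<Rightarrow> vec2" where
  "Lambda M U s = (\<lambda>j y. if j < M then (U ^^ j) (s j) y else 0)"

definition count_final :: "nat \<Rightarrow> (nat \<Rightarrow> nat) \<Rightarrow> nat \<Rightarrow> vec2" where
  "count_final N f M =
     apply_first (QFT_inv M) (Lambda M (Qop N f) (apply_first (QFT M) (count_init N M)))"

definition count_prob :: "nat \<Rightarrow> (nat \<Rightarrow> nat) \<Rightarrow> nat \<Rightarrow> nat \<Rightarrow> real" where
  "count_prob N f M y = (\<Sum>x<N. (cmod (count_final N f M y x))\<^sup>2)"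

definition count_output :: "nat \<Rightarrow> nat \<Rightarrow> nat \<Rightarrow> real" where
  "count_output N M y = real N * (sin (pi * real y / real M))\<^sup>2"

end

(*
  Put sin^2 theta = t / N with 0 <= theta <= pi / 2.  The iterate Q maps the plane of real
  vectors that are constant on f^-1(1) and on its complement into itself and acts there as a
  rotation by 2 theta, so Lambda_M(Q) turns the uniform superposition into the amplitudes
  sin((2j+1) theta) and cos((2j+1) theta) on the two parts.  After the inverse Fourier
  transform, the distribution of y is the average of the phase estimation distributions for
  the phases theta / pi and - theta / pi.  Each of them puts mass at least 8 / pi^2 on the (at
  most two) outcomes y with y / M within 1 / M of the phase modulo 1, because
  sin^2 (pi r) (1 / r^2 + 1 / (1 - r)^2) >= 8 for 0 < r < 1.  For such y,
  |sin^2 (pi y / M) - sin^2 theta| <= |sin (2 theta)| pi / M + (pi / M)^2, which for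
  M >= sqrt N gives |t' - t| <= 2 pi sqrt (t (N - t) / N) + pi^2, and pi^2 + 2/3 < 11.
*)

theory Submission
  imports Defs "HOL-Analysis.Complex_Transcendental"
begin

section \<open>Fourier transform\<close>

lemma sum_cis_roots_of_unity:
  assumes "N > 0"
  shows "(\<Sum>y<N. cis (2 * pi * real y * real_of_int k / real N))
    = (if int N dvd k then of_nat N else 0)"
proof -
  define z where "z = cis (2 * pi * real_of_int k / real N)"
  have powers: "cis (2 * pi * real y * real_of_int k / real N) = z ^ y" for y
    unfolding z_def Complex.DeMoivre by (simp add: field_simps)
  show ?thesis
  proof (cases "int N dvd k")
    case True
    then obtain n where "k = int N * n" by blast
    then have "z = cis (2 * pi * real_of_int n)"
      unfolding z_def using assms by (intro arg_cong[where f = cis]) simp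
    also have "\<dots> = 1" by (rule cis_multiple_2pi) simp
    finally show ?thesis using True unfolding powers by simp
  next
    case False
    have "z \<noteq> 1"
    proof
      assume "z = 1"
      then have "cos (2 * pi * real_of_int k / real N) = 1" unfolding z_def
        by (metis cis.sel(1) one_complex.sel(1))
      then obtain n :: int where "2 * pi * real_of_int k / real N = real_of_int n * 2 * pi"
        using cos_one_2pi_int by blast
      then have "real_of_int k = real_of_int (int N * n)" using assms by (simp add: field_simps)
      then show False using False by (simp only: of_int_eq_iff) simp
    qed
    moreover have "z ^ N = 1" unfolding z_def Complex.DeMoivre using assms by simp
    ultimately show ?thesis using False unfolding powers geometric_sum[OF \<open>z \<noteq> 1\<close>] by simp
  qed
qed

lemma QFT_QFT_inv: "QFT N (QFT_inv N w) x = (if x < N then w x else 0)"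
proof (cases "x < N")
  case True
  then have N: "N > 0" by simp
  have orthogonal: "(\<Sum>y<N. cis (2 * pi * real y * real x / real N)
      * cis (- 2 * pi * real x' * real y / real N))
      = (if x' = x then of_nat N else 0)" if "x' < N" for x'
  proof -
    have "int N dvd int x - int x' \<longleftrightarrow> x' = x"
    proof
      assume dvd: "int N dvd int x - int x'"
      show "x' = x"
      proof (rule ccontr)
        assume "x' \<noteq> x"
        then have "int N \<le> \<bar>int x - int x'\<bar>" using dvd_imp_le_int[OF _ dvd] by simp
        then show False using True that by arith
      qed
    qed simp
    moreover have "cis (2 * pi * real y * real x / real N)
        * cis (- 2 * pi * real x' * real y / real N)
        = cis (2 * pi * real y * real_of_int (int x - int x') / real N)" for y
      by (simp add: cis_mult diff_divide_distrib algebra_simps)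
    ultimately show ?thesis using sum_cis_roots_of_unity[OF N, of "int x - int x'"] by simp
  qed
  have "QFT N (QFT_inv N w) x = (\<Sum>y<N. \<Sum>x'<N. w x' / of_nat N *
      (cis (2 * pi * real y * real x / real N) * cis (- 2 * pi * real x' * real y / real N)))"
    using True N by (simp add: QFT_def QFT_inv_def sum_distrib_left field_simps
        flip: of_real_mult real_sqrt_mult)
  also have "\<dots> = (\<Sum>x'<N. w x' / of_nat N * (\<Sum>y<N.
      cis (2 * pi * real y * real x / real N) * cis (- 2 * pi * real x' * real y / real N)))"
    by (subst sum.swap) (simp add: sum_distrib_left)
  also have "\<dots> = (\<Sum>x'<N. w x' / of_nat N * (if x' = x then of_nat N else 0))"
    by (intro sum.cong refl, subst orthogonal) auto
  also have "\<dots> = w x" using True by (simp add: if_distrib cong: if_cong)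
  finally show ?thesis using True by simp
qed (simp add: QFT_def)

lemma QFT_S_0_QFT_inv:
  assumes "x < N"
  shows "QFT N (S_0 N (QFT_inv N w)) x = w x - 2 / of_nat N * (\<Sum>x'<N. w x')"
proof -
  define u where "u = QFT_inv N w"
  define a where "a y = complex_of_real (1 / sqrt (real N))
      * cis (2 * pi * real y * real x / real N)" for y
  have "QFT N (S_0 N u) x = (\<Sum>y<N. a y * u y - (if y = 0 then 2 * a y * u y else 0))"
    using assms by (auto simp: QFT_def S_0_def a_def intro!: sum.cong)
  also have "\<dots> = QFT N u x - 2 * a 0 * u 0"
    using assms by (simp add: sum_subtractf QFT_def a_def)
  also have "2 * a 0 * u 0 = 2 / of_nat N * (\<Sum>x'<N. w x')"
    using assms by (simp add: a_def u_def QFT_inv_def sum_distrib_left field_simps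
        flip: of_real_mult real_sqrt_mult)
  finally show ?thesis using assms by (simp add: u_def QFT_QFT_inv)
qed

lemma QFT_delta_0:
  "QFT M (\<lambda>j. if j = 0 then z else 0) k
    = (if k < M then z / complex_of_real (sqrt (real M)) else 0)"
  by (simp add: QFT_def if_distrib[of "(*) _"] cong: if_cong)

lemma QFT_inv_scale: "QFT_inv M (\<lambda>j. a * g j) y = a * QFT_inv M g y"
  by (simp add: QFT_inv_def sum_distrib_left mult_ac)

section \<open>The iterate Q on two-valued vectors\<close>

lemma sum_if_card_eq:
  "(\<Sum>x<N. if P x then a else b) =
     of_nat (card {x. x < N \<and> P x}) * a
      + (of_nat N - of_nat (card {x. x < N \<and> P x})) * (b :: 'a :: comm_ring_1)"
proof -
  have "(\<Sum>x<N. if P x then a else b) = (\<Sum>x<N. b + (if P x then a - b else 0))"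
    by (intro sum.cong) auto
  also have "\<dots> = of_nat N * b + of_nat (card {x. x < N \<and> P x}) * (a - b)"
    by (simp add: sum.distrib sum.inter_filter[symmetric] lessThan_def Collect_conj_eq[symmetric])
  finally show ?thesis by (simp add: algebra_simps)
qed

lemma card_Collect_less_le: "card {x. x < N \<and> P x} \<le> N"
  using card_mono[of "{..<N}" "{x. x < N \<and> P x}"] by auto

definition good_bad_vec :: "nat \<Rightarrow> (nat \<Rightarrow> nat) \<Rightarrow> real \<times> real \<Rightarrow> nat \<Rightarrow> complex" where
  "good_bad_vec N f p =
    (\<lambda>x. if x < N then complex_of_real (if f x = 1 then fst p else snd p) else 0)"

definition grover_step :: "real \<Rightarrow> real \<Rightarrow> real \<times> real \<Rightarrow> real \<times> real" where
  "grover_step N t p = (let s = 2 / N * ((N - t) * snd p - t * fst p) in (fst p + s, s - snd p))"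

lemma Qop_good_bad_vec:
  assumes "\<forall>x<N. f x \<in> {0, 1}"
  shows "Qop N f (good_bad_vec N f p) =
    good_bad_vec N f (grover_step (real N) (real (card {x. x < N \<and> f x = 1})) p)"
proof
  fix x
  obtain a b where p: "p = (a, b)" by fastforce
  define t where "t = card {x. x < N \<and> f x = 1}"
  define w where "w = good_bad_vec N f (- a, b)"
  have "S_f N f (good_bad_vec N f p) = w"
    using assms by (force simp: S_f_def good_bad_vec_def w_def p)
  then have Qop_x: "Qop N f (good_bad_vec N f p) x = 2 / of_nat N * (\<Sum>x'<N. w x') - w x" if "x < N"
    using that by (simp add: Qop_def QFT_S_0_QFT_inv)
  have sum_w: "(\<Sum>x'<N. w x') = of_nat t * complex_of_real (- a)
      + (of_nat N - of_nat t) * complex_of_real b"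
    unfolding t_def sum_if_card_eq[symmetric]
    by (intro sum.cong) (auto simp: w_def good_bad_vec_def)
  show "Qop N f (good_bad_vec N f p) x = good_bad_vec N f (grover_step (real N) (real t) p) x"
  proof (cases "x < N")
    case True
    then show ?thesis unfolding Qop_x[OF True] sum_w
      by (simp add: good_bad_vec_def grover_step_def w_def p Let_def algebra_simps)
  qed (simp add: Qop_def QFT_def good_bad_vec_def)
qed

lemma Qop_funpow_good_bad_vec:
  assumes "\<forall>x<N. f x \<in> {0, 1}"
  shows "(Qop N f ^^ j) (good_bad_vec N f p) =
    good_bad_vec N f ((grover_step (real N) (real (card {x. x < N \<and> f x = 1})) ^^ j) p)"
  by (induction j) (simp_all add: Qop_good_bad_vec[OF assms])

lemma grover_step_funpow_sin_cos:
  assumes "N > 0" and "t = N * (sin \<theta>)\<^sup>2"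
  shows "sin \<theta> * fst ((grover_step N t ^^ j) (c, c)) = c * sin (real (2 * j + 1) * \<theta>)
       \<and> cos \<theta> * snd ((grover_step N t ^^ j) (c, c)) = c * cos (real (2 * j + 1) * \<theta>)"
proof (induction j)
  case (Suc j)
  obtain a b where ab: "(grover_step N t ^^ j) (c, c) = (a, b)" by fastforce
  define X where "X = real (2 * j + 1) * \<theta>"
  have IH: "sin \<theta> * a = c * sin X" "cos \<theta> * b = c * cos X"
    using Suc ab by (auto simp: X_def)
  define s where "s = 2 / N * ((N - t) * b - t * a)"
  have "s = 2 * ((cos \<theta>)\<^sup>2 * b - (sin \<theta>)\<^sup>2 * a)"
    using assms by (simp add: s_def cos_squared_eq field_simps)
  also have "\<dots> = 2 * (cos \<theta> * (c * cos X) - sin \<theta> * (c * sin X))"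
    by (simp add: IH[symmetric] power2_eq_square mult.assoc)
  also have "\<dots> = 2 * c * cos (X + \<theta>)"
    by (simp add: cos_add algebra_simps)
  finally have s: "s = 2 * c * cos (X + \<theta>)" .
  have "sin \<theta> * (a + s) = c * (sin X + 2 * (cos (X + \<theta>) * sin \<theta>))"
    unfolding distrib_left IH s by (simp add: algebra_simps)
  also have "2 * (cos (X + \<theta>) * sin \<theta>) = sin (X + 2 * \<theta>) - sin X"
    by (simp add: sin_diff_sin add_divide_distrib)
  finally have sin_step: "sin \<theta> * (a + s) = c * sin (X + 2 * \<theta>)" by simp
  have "cos \<theta> * (s - b) = c * (2 * (cos (X + \<theta>) * cos \<theta>) - cos X)"
    unfolding right_diff_distrib IH s by (simp add: algebra_simps)
  also have "2 * (cos (X + \<theta>) * cos \<theta>) = cos X + cos (X + 2 * \<theta>)"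
    by (simp add: cos_plus_cos add_divide_distrib)
  finally have cos_step: "cos \<theta> * (s - b) = c * cos (X + 2 * \<theta>)" by simp
  have "(grover_step N t ^^ Suc j) (c, c) = (a + s, s - b)"
    by (simp add: ab grover_step_def s_def Let_def)
  moreover have "real (2 * Suc j + 1) * \<theta> = X + 2 * \<theta>"
    by (simp add: X_def algebra_simps)
  ultimately show ?case
    using sin_step cos_step by simp
qed simp

section \<open>Distribution of the measured outcome\<close>

lemma count_final_eq:
  assumes "\<forall>x<N. f x \<in> {0, 1}" and "y < M"
  defines "c \<equiv> 1 / (sqrt (real M) * sqrt (real N))"
  shows "count_final N f M y x = QFT_inv M (\<lambda>j. good_bad_vec N f
    ((grover_step (real N) (real (card {x. x < N \<and> f x = 1})) ^^ j) (c, c)) x) y"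
proof -
  have "apply_first (QFT M) (count_init N M) j = good_bad_vec N f (c, c)" if "j < M" for j
    using that by (auto simp: apply_first_def count_init_def ket_def QFT_delta_0
      good_bad_vec_def c_def)
  then show ?thesis
    using assms by (auto simp: count_final_def apply_first_def Lambda_def QFT_inv_def
      Qop_funpow_good_bad_vec intro!: sum.cong)
qed

lemma count_prob_eq:
  assumes "\<forall>x<N. f x \<in> {0, 1}" and "y < M"
  defines "t \<equiv> real (card {x. x < N \<and> f x = 1})"
    and "c \<equiv> 1 / (sqrt (real M) * sqrt (real N))"
  defines "p \<equiv> \<lambda>j. (grover_step (real N) t ^^ j) (c, c)"
  shows "count_prob N f M y = t * (cmod (QFT_inv M (\<lambda>j. of_real (fst (p j))) y))\<^sup>2
    + (real N - t) * (cmod (QFT_inv M (\<lambda>j. of_real (snd (p j))) y))\<^sup>2"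
proof -
  have "count_final N f M y x = (if f x = 1 then QFT_inv M (\<lambda>j. of_real (fst (p j))) y
      else QFT_inv M (\<lambda>j. of_real (snd (p j))) y)" if "x < N" for x
    using that unfolding count_final_eq[OF assms(1,2)] t_def c_def p_def
    by (simp add: good_bad_vec_def)
  then have "count_prob N f M y =
      (\<Sum>x<N. if f x = 1 then (cmod (QFT_inv M (\<lambda>j. of_real (fst (p j))) y))\<^sup>2
      else (cmod (QFT_inv M (\<lambda>j. of_real (snd (p j))) y))\<^sup>2)"
    unfolding count_prob_def by (intro sum.cong) auto
  then show ?thesis by (simp add: sum_if_card_eq t_def)
qed

lemma sin_cos_arcsin_sqrt_ratio:
  fixes t n :: real
  assumes "0 < n" and "0 \<le> t" and "t \<le> n"
  shows "sin (arcsin (sqrt (t / n))) = sqrt (t / n)"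
    and "cos (arcsin (sqrt (t / n))) = sqrt (1 - t / n)"
proof -
  have unit: "-1 \<le> sqrt (t / n)" "sqrt (t / n) \<le> 1"
    using assms by (auto intro: order_trans[OF _ real_sqrt_ge_zero])
  then show "sin (arcsin (sqrt (t / n))) = sqrt (t / n)" by simp
  show "cos (arcsin (sqrt (t / n))) = sqrt (1 - t / n)"
    using unit assms by (subst cos_arcsin) auto
qed

lemma count_prob_eq_sin_cos:
  assumes "N \<ge> 1" and "\<forall>x<N. f x \<in> {0, 1}" and "y < M"
  defines "\<theta> \<equiv> arcsin (sqrt (real (card {x. x < N \<and> f x = 1}) / real N))"
  shows "count_prob N f M y =
      (cmod (QFT_inv M (\<lambda>j. of_real (sin (real (2 * j + 1) * \<theta>) / sqrt (real M))) y))\<^sup>2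
    + (cmod (QFT_inv M (\<lambda>j. of_real (cos (real (2 * j + 1) * \<theta>) / sqrt (real M))) y))\<^sup>2"
proof -
  define t where "t = real (card {x. x < N \<and> f x = 1})"
  define c where "c = 1 / (sqrt (real M) * sqrt (real N))"
  define p where "p j = (grover_step (real N) t ^^ j) (c, c)" for j
  have N: "real N > 0" using assms(1) by simp
  have t: "0 \<le> t" "t \<le> real N" using card_Collect_less_le by (auto simp: t_def)
  have sin: "sin \<theta> = sqrt (t / real N)" and cos: "cos \<theta> = sqrt (1 - t / real N)"
    using sin_cos_arcsin_sqrt_ratio[OF N t] by (simp_all add: \<theta>_def t_def)
  have t_sin: "t = real N * (sin \<theta>)\<^sup>2" using t N by (simp add: sin)
  have sqrt_t: "sqrt t = sqrt (real N) * sin \<theta>"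
    and sqrt_Nt: "sqrt (real N - t) = sqrt (real N) * cos \<theta>"
    using t N by (simp_all add: sin cos real_sqrt_mult[symmetric] field_simps)
  have amp: "sqrt t * fst (p j) = sin (real (2 * j + 1) * \<theta>) / sqrt (real M)"
      "sqrt (real N - t) * snd (p j) = cos (real (2 * j + 1) * \<theta>) / sqrt (real M)" for j
  proof -
    have Nc: "sqrt (real N) * c = 1 / sqrt (real M)" using N by (simp add: c_def)
    have "sin \<theta> * fst (p j) = c * sin (real (2 * j + 1) * \<theta>)"
      "cos \<theta> * snd (p j) = c * cos (real (2 * j + 1) * \<theta>)"
      using grover_step_funpow_sin_cos[OF N t_sin, where c = c and j = j] by (auto simp: p_def)
    then show "sqrt t * fst (p j) = sin (real (2 * j + 1) * \<theta>) / sqrt (real M)"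
      "sqrt (real N - t) * snd (p j) = cos (real (2 * j + 1) * \<theta>) / sqrt (real M)"
      unfolding sqrt_t sqrt_Nt mult.assoc by (simp_all add: mult.assoc[symmetric] Nc)
  qed
  have "count_prob N f M y = (cmod (of_real (sqrt t) * QFT_inv M (\<lambda>j. of_real (fst (p j))) y))\<^sup>2
      + (cmod (of_real (sqrt (real N - t)) * QFT_inv M (\<lambda>j. of_real (snd (p j))) y))\<^sup>2"
    using t unfolding count_prob_eq[OF assms(2,3)]
    by (simp add: norm_mult power_mult_distrib t_def c_def p_def)
  also have "\<dots> = (cmod (QFT_inv M (\<lambda>j. of_real (sqrt t * fst (p j))) y))\<^sup>2
      + (cmod (QFT_inv M (\<lambda>j. of_real (sqrt (real N - t) * snd (p j))) y))\<^sup>2"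
    by (simp add: QFT_inv_scale)
  finally show ?thesis by (simp only: amp)
qed

(* fejer M (2 * pi * (w - y / M)) is the probability of the outcome y when the phase w is
   estimated with an M-dimensional register; it is the Fejer kernel divided by M. *)

definition fejer :: "nat \<Rightarrow> real \<Rightarrow> real" where
  "fejer M d = (cmod (\<Sum>j<M. cis (real j * d)))\<^sup>2 / (real M)\<^sup>2"

lemma norm_sum_sin_cos_sq:
  "(cmod (\<Sum>j\<in>A. z j * of_real (sin (\<alpha> j))))\<^sup>2 + (cmod (\<Sum>j\<in>A. z j * of_real (cos (\<alpha> j))))\<^sup>2
    = ((cmod (\<Sum>j\<in>A. z j * cis (\<alpha> j)))\<^sup>2 + (cmod (\<Sum>j\<in>A. z j * cis (- \<alpha> j)))\<^sup>2) / 2"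
proof -
  define u where "u = (\<Sum>j\<in>A. z j * of_real (cos (\<alpha> j)))"
  define v where "v = (\<Sum>j\<in>A. z j * of_real (sin (\<alpha> j)))"
  have "(\<Sum>j\<in>A. z j * cis (\<alpha> j)) = u + \<i> * v" "(\<Sum>j\<in>A. z j * cis (- \<alpha> j)) = u - \<i> * v"
    by (simp_all add: u_def v_def cis.ctr Complex_eq sum_distrib_left sum.distrib sum_subtractf
        algebra_simps)
  moreover have "(cmod (u + \<i> * v))\<^sup>2 + (cmod (u - \<i> * v))\<^sup>2 = 2 * (cmod u)\<^sup>2 + 2 * (cmod v)\<^sup>2"
    unfolding cmod_power2 by (simp add: power2_eq_square algebra_simps)
  ultimately show ?thesis by (simp add: u_def v_def)
qed

lemma QFT_inv_sin_cos_eq_fejer: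
  assumes "y < M"
  shows "(cmod (QFT_inv M (\<lambda>j. of_real (sin (real (2 * j + 1) * \<theta>) / sqrt (real M))) y))\<^sup>2
    + (cmod (QFT_inv M (\<lambda>j. of_real (cos (real (2 * j + 1) * \<theta>) / sqrt (real M))) y))\<^sup>2
    = (fejer M (2 * \<theta> - 2 * pi * real y / real M)
      + fejer M (- 2 * \<theta> - 2 * pi * real y / real M)) / 2"
proof -
  define z where "z j = cis (- 2 * pi * real j * real y / real M) / of_nat M" for j
  have QFT_inv_eq: "QFT_inv M (\<lambda>j. of_real (g j / sqrt (real M))) y
      = (\<Sum>j<M. z j * of_real (g j))" for g
    using assms by (auto simp: QFT_inv_def z_def intro!: sum.cong
      simp flip: of_real_mult real_sqrt_mult)
  have plus: "(\<Sum>j<M. z j * cis (real (2 * j + 1) * \<theta>)) =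
      cis \<theta> / of_nat M * (\<Sum>j<M. cis (real j * (2 * \<theta> - 2 * pi * real y / real M)))"
    by (auto simp: z_def sum_distrib_left cis_mult intro!: sum.cong arg_cong[where f = cis])
      (simp add: field_simps)
  have minus: "(\<Sum>j<M. z j * cis (- (real (2 * j + 1) * \<theta>))) =
      cis (- \<theta>) / of_nat M * (\<Sum>j<M. cis (real j * (- 2 * \<theta> - 2 * pi * real y / real M)))"
    by (auto simp: z_def sum_distrib_left cis_mult intro!: sum.cong arg_cong[where f = cis])
      (simp add: field_simps)
  show ?thesis
    unfolding QFT_inv_eq norm_sum_sin_cos_sq plus minus
    using assms by (simp add: fejer_def norm_mult norm_divide power_divide)
qed

lemma count_prob_eq_fejer:
  assumes "N \<ge> 1" and "\<forall>x<N. f x \<in> {0, 1}" and "y < M"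
  defines "w \<equiv> arcsin (sqrt (real (card {x. x < N \<and> f x = 1}) / real N)) / pi"
  shows "count_prob N f M y =
    (fejer M (2 * pi * (w - real y / real M)) + fejer M (2 * pi * (- w - real y / real M))) / 2"
proof -
  have "2 * pi * (w - real y / real M) = 2 * (pi * w) - 2 * pi * real y / real M"
    "2 * pi * (- w - real y / real M) = - 2 * (pi * w) - 2 * pi * real y / real M"
    by (simp_all add: algebra_simps)
  then show ?thesis
    using count_prob_eq_sin_cos[OF assms(1-3)] QFT_inv_sin_cos_eq_fejer[OF assms(3)]
    by (simp add: w_def)
qed

section \<open>Mass of the Fejer kernel near its peak\<close>

lemma fejer_nonneg: "fejer M d \<ge> 0"
  by (simp add: fejer_def)

lemma fejer_2pi_multiple:
  assumes "M \<ge> 1"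
  shows "fejer M (2 * pi * real_of_int k) = 1"
proof -
  have "cis (real j * (2 * pi * real_of_int k)) = 1" for j
    using cis_multiple_2pi[of "real_of_int (int j * k)"] by (simp add: mult_ac)
  then show ?thesis using assms by (simp add: fejer_def)
qed

lemma norm_cis_minus_1_sq: "(cmod (cis a - 1))\<^sup>2 = 4 * (sin (a / 2))\<^sup>2"
proof -
  have "(cmod (cis a - 1))\<^sup>2 = 2 - 2 * cos a"
    unfolding cmod_power2 by (simp add: power2_eq_square algebra_simps)
  then show ?thesis using cos_double_sin[of "a / 2"] by simp
qed

lemma fejer_closed_form:
  assumes "sin (d / 2) \<noteq> 0"
  shows "fejer M d = (sin (real M * d / 2))\<^sup>2 / ((real M)\<^sup>2 * (sin (d / 2))\<^sup>2)"
proof -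
  have "cis d \<noteq> 1"
    using assms norm_cis_minus_1_sq[of d] by auto
  then have "(\<Sum>j<M. cis (real j * d)) = (cis (real M * d) - 1) / (cis d - 1)"
    by (simp add: geometric_sum flip: Complex.DeMoivre)
  then show ?thesis
    by (simp add: fejer_def norm_divide power_divide norm_cis_minus_1_sq)
qed

lemma sin_sq_add_int_pi: "(sin (x + real_of_int k * pi))\<^sup>2 = (sin x)\<^sup>2"
proof -
  have "cos (2 * (x + real_of_int k * pi)) = cos (2 * x + 2 * pi * real_of_int k)"
    by (simp add: algebra_simps)
  also have "\<dots> = cos (2 * x)" unfolding cos_add by simp
  finally show ?thesis unfolding cos_double_sin by simp
qed

lemma fejer_near_integer_ge:
  assumes "M \<ge> 1" and "\<delta> \<noteq> 0" and "\<bar>\<delta>\<bar> < 1"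
  shows "(sin (pi * \<delta>))\<^sup>2 / (pi\<^sup>2 * \<delta>\<^sup>2) \<le> fejer M (2 * pi * (\<delta> / real M + real_of_int k))"
proof -
  define d where "d = 2 * pi * (\<delta> / real M + real_of_int k)"
  have M: "real M \<ge> 1" using assms(1) by simp
  have "d / 2 = pi * \<delta> / real M + real_of_int k * pi"
    by (simp add: d_def algebra_simps)
  then have half: "(sin (d / 2))\<^sup>2 = (sin (pi * \<delta> / real M))\<^sup>2"
    by (simp only: sin_sq_add_int_pi)
  have "real M * d / 2 = pi * \<delta> + real_of_int (int M * k) * pi"
    using M by (simp add: d_def field_simps)
  then have full: "(sin (real M * d / 2))\<^sup>2 = (sin (pi * \<delta>))\<^sup>2"
    by (simp only: sin_sq_add_int_pi)
  have "\<bar>pi * \<delta> / real M\<bar> < pi"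
    using assms M by (simp add: abs_mult divide_less_eq)
  then have "sin (pi * \<delta> / real M) \<noteq> 0" using assms by (simp add: sin_zero_pi_iff)
  then have pos: "0 < (real M)\<^sup>2 * (sin (pi * \<delta> / real M))\<^sup>2" using M by simp
  have "(sin (pi * \<delta> / real M))\<^sup>2 \<le> (pi * \<delta> / real M)\<^sup>2"
    using abs_sin_x_le_abs_x abs_le_square_iff by blast
  then have "(real M)\<^sup>2 * (sin (pi * \<delta> / real M))\<^sup>2 \<le> (real M)\<^sup>2 * (pi * \<delta> / real M)\<^sup>2"
    by (rule mult_left_mono) simp
  also have "\<dots> = pi\<^sup>2 * \<delta>\<^sup>2" using M by (simp add: power_divide power_mult_distrib)
  finally have "(sin (pi * \<delta>))\<^sup>2 / (pi\<^sup>2 * \<delta>\<^sup>2)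
      \<le> (sin (pi * \<delta>))\<^sup>2 / ((real M)\<^sup>2 * (sin (pi * \<delta> / real M))\<^sup>2)"
    using pos by (intro divide_left_mono) auto
  moreover have "sin (d / 2) \<noteq> 0"
    using half \<open>sin (pi * \<delta> / real M) \<noteq> 0\<close> by auto
  then have "fejer M d = (sin (pi * \<delta>))\<^sup>2 / ((real M)\<^sup>2 * (sin (pi * \<delta> / real M))\<^sup>2)"
    by (simp add: fejer_closed_form half full)
  ultimately show ?thesis by (simp add: d_def)
qed

lemma cos_ge_1_minus_sq_div_2: "1 - x\<^sup>2 / 2 \<le> cos (x :: real)"
proof -
  have "(sin (x / 2))\<^sup>2 \<le> (x / 2)\<^sup>2"
    using abs_sin_x_le_abs_x abs_le_square_iff by blast
  then show ?thesis using cos_double_sin[of "x / 2"] by (simp add: power_divide)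
qed

lemma sin_ge_minus_cube_div_6:
  assumes "0 \<le> x"
  shows "x - x ^ 3 / 6 \<le> sin (x :: real)"
proof -
  have "\<bar>sin x - (\<Sum>m<3. sin_coeff m * x ^ m)\<bar> \<le> inverse (fact 3) * \<bar>x\<bar> ^ 3"
    by (rule Maclaurin_sin_bound)
  moreover have "(\<Sum>m<3. sin_coeff m * x ^ m) = x"
    by (simp add: eval_nat_numeral sin_coeff_def)
  ultimately have "\<bar>sin x - x\<bar> \<le> x ^ 3 / 6" using assms by (simp add: eval_nat_numeral)
  then show ?thesis by arith
qed

lemma cos_pi_sq_bound_small:
  assumes "0 \<le> v" and "v \<le> 51 / 200"
  shows "(1 - 4 * v\<^sup>2)\<^sup>2 \<le> (cos (pi * v))\<^sup>2 * (1 + 4 * v\<^sup>2)"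
proof -
  define p where "p = pi\<^sup>2 / 2"
  define w where "w = v\<^sup>2"
  have "v\<^sup>2 \<le> (51 / 200)\<^sup>2" using assms by (intro power_mono) auto
  then have w: "0 \<le> w" "w \<le> 2601 / 40000" by (simp_all add: w_def power2_eq_square)
  have "pi * pi \<le> 3.1416 * 3.1416" using pi_approx by (intro mult_mono) auto
  then have p: "0 \<le> p" "p \<le> 4.935" by (simp_all add: p_def power2_eq_square)
  have "p * w \<le> 4.935 * (2601 / 40000)" using p w by (intro mult_mono) auto
  then have "1 - p * w \<le> cos (pi * v)" "0 \<le> 1 - p * w"
    using cos_ge_1_minus_sq_div_2[of "pi * v"] by (simp_all add: p_def w_def power_mult_distrib)
  then have c: "(1 - p * w)\<^sup>2 * (1 + 4 * w) \<le> (cos (pi * v))\<^sup>2 * (1 + 4 * w)"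
    using w by (intro mult_right_mono power_mono) auto
  have "(1 - p * w)\<^sup>2 * (1 + 4 * w) - (1 - 4 * w)\<^sup>2
      = w * ((12 - 2 * p) - 32 * w + (p - 4)\<^sup>2 * w + 4 * p\<^sup>2 * w\<^sup>2)"
    by (simp add: power2_eq_square algebra_simps)
  moreover have "0 \<le> (12 - 2 * p) - 32 * w + (p - 4)\<^sup>2 * w + 4 * p\<^sup>2 * w\<^sup>2"
    using p w mult_nonneg_nonneg[of "(p - 4)\<^sup>2" w] by simp
  ultimately have "(1 - 4 * w)\<^sup>2 \<le> (1 - p * w)\<^sup>2 * (1 + 4 * w)"
    using w by (metis diff_ge_0_iff_ge mult_nonneg_nonneg)
  with c show ?thesis by (simp add: w_def)
qed

lemma cos_pi_sq_bound_large:
  assumes "51 / 200 \<le> v" and "v \<le> 1 / 2"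
  shows "(1 - 4 * v\<^sup>2)\<^sup>2 \<le> (cos (pi * v))\<^sup>2 * (1 + 4 * v\<^sup>2)"
proof -
  define u where "u = 1 / 2 - v"
  have u: "0 \<le> u" "u \<le> 49 / 200" using assms by (simp_all add: u_def)
  define A where "A = pi - pi ^ 3 * u\<^sup>2 / 6"
  have "pi ^ 3 \<le> 3.1416 ^ 3" using pi_approx by (intro power_mono) auto
  then have "pi ^ 3 \<le> 31.01" by (simp add: power3_eq_cube)
  moreover have "u\<^sup>2 \<le> (49 / 200)\<^sup>2" using u by (intro power_mono) auto
  then have "u\<^sup>2 \<le> 2401 / 40000" by (simp add: power2_eq_square)
  ultimately have "pi ^ 3 * u\<^sup>2 \<le> 31.01 * (2401 / 40000)" by (intro mult_mono) auto
  then have A: "2.83 \<le> A" unfolding A_def using pi_approx by simp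
  have "u * A \<le> sin (pi * u)"
    using sin_ge_minus_cube_div_6[of "pi * u"] u
    by (simp add: A_def algebra_simps power2_eq_square power3_eq_cube)
  moreover have "cos (pi * v) = sin (pi * u)"
    by (simp add: u_def right_diff_distrib sin_diff)
  ultimately have "(u * A)\<^sup>2 \<le> (cos (pi * v))\<^sup>2"
    using u A by (intro power_mono) auto
  moreover have "8 \<le> A\<^sup>2"
    using power_mono[OF A, of 2] by (simp add: power2_eq_square)
  then have "8 * u\<^sup>2 \<le> (u * A)\<^sup>2"
    by (simp add: power_mult_distrib mult.commute mult_right_mono)
  ultimately have c: "8 * u\<^sup>2 \<le> (cos (pi * v))\<^sup>2" by linarith
  have "(1 - 4 * v\<^sup>2)\<^sup>2 = 8 * u\<^sup>2 * (2 * (1 - u)\<^sup>2)"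
    by (simp add: u_def power2_eq_square algebra_simps)
  also have "\<dots> \<le> (cos (pi * v))\<^sup>2 * (2 * (1 - u)\<^sup>2 + 2 * u\<^sup>2)"
    using c by (intro mult_mono) auto
  also have "2 * (1 - u)\<^sup>2 + 2 * u\<^sup>2 = 1 + 4 * v\<^sup>2"
    by (simp add: u_def power2_eq_square algebra_simps)
  finally show ?thesis .
qed

lemma sin_pi_sq_div_sq_ge_8:
  assumes "0 < r" and "r < 1"
  shows "8 \<le> (sin (pi * r))\<^sup>2 / r\<^sup>2 + (sin (pi * r))\<^sup>2 / (1 - r)\<^sup>2"
proof -
  define v where "v = \<bar>1 / 2 - r\<bar>"
  have v: "0 \<le> v" "v \<le> 1 / 2" using assms by (auto simp: v_def abs_if)
  have bound: "(1 - 4 * v\<^sup>2)\<^sup>2 \<le> (cos (pi * v))\<^sup>2 * (1 + 4 * v\<^sup>2)"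
    using v cos_pi_sq_bound_small cos_pi_sq_bound_large by (cases "v \<le> 51 / 200") auto
  have "cos (pi * \<bar>x\<bar>) = cos (pi * x)" for x :: real
    by (cases "0 \<le> x") auto
  then have sin: "(sin (pi * r))\<^sup>2 = (cos (pi * v))\<^sup>2"
    by (simp add: v_def right_diff_distrib cos_diff)
  have v2: "v\<^sup>2 = (1 / 2 - r)\<^sup>2" by (simp add: v_def)
  have sum: "r\<^sup>2 + (1 - r)\<^sup>2 = (1 + 4 * v\<^sup>2) / 2" and prod: "r * (1 - r) = (1 - 4 * v\<^sup>2) / 4"
    unfolding v2 by (simp_all add: power2_eq_square algebra_simps)
  have "0 < r * (1 - r)" using assms by simp
  then have pos: "0 < 1 - 4 * v\<^sup>2" unfolding prod by simp
  have "X / r\<^sup>2 + X / q\<^sup>2 = X * (r\<^sup>2 + q\<^sup>2) / (r * q)\<^sup>2" if "q \<noteq> 0" for X q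
    using assms that by (simp add: field_simps power2_eq_square)
  then have "(sin (pi * r))\<^sup>2 / r\<^sup>2 + (sin (pi * r))\<^sup>2 / (1 - r)\<^sup>2
      = (sin (pi * r))\<^sup>2 * (r\<^sup>2 + (1 - r)\<^sup>2) / (r * (1 - r))\<^sup>2"
    using assms by simp
  also have "\<dots> = 8 * ((cos (pi * v))\<^sup>2 * (1 + 4 * v\<^sup>2)) / (1 - 4 * v\<^sup>2)\<^sup>2"
    unfolding sin sum prod using pos by (simp add: field_simps)
  finally show ?thesis using bound pos by (simp add: le_divide_eq)
qed

lemma fejer_rounding_pair_ge:
  assumes "M \<ge> 1" and "0 < r" and "r < 1"
  shows "8 / pi\<^sup>2 \<le> fejer M (2 * pi * (r / real M + real_of_int k))
    + fejer M (2 * pi * ((r - 1) / real M + real_of_int l))"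
proof -
  have "(sin (pi * r))\<^sup>2 / (pi\<^sup>2 * r\<^sup>2) \<le> fejer M (2 * pi * (r / real M + real_of_int k))"
    using fejer_near_integer_ge[OF assms(1), of r] assms by simp
  moreover have "(sin (pi * (r - 1)))\<^sup>2 = (sin (pi * r))\<^sup>2" "(r - 1)\<^sup>2 = (1 - r)\<^sup>2"
    by (simp_all add: right_diff_distrib power2_commute)
  then have "(sin (pi * r))\<^sup>2 / (pi\<^sup>2 * (1 - r)\<^sup>2)
      \<le> fejer M (2 * pi * ((r - 1) / real M + real_of_int l))"
    using fejer_near_integer_ge[OF assms(1), of "r - 1"] assms by simp
  moreover have "8 / pi\<^sup>2 \<le> (sin (pi * r))\<^sup>2 / (pi\<^sup>2 * r\<^sup>2) + (sin (pi * r))\<^sup>2 / (pi\<^sup>2 * (1 - r)\<^sup>2)"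
    using divide_right_mono[OF sin_pi_sq_div_sq_ge_8[OF assms(2,3)], of "pi\<^sup>2"]
    by (simp add: add_divide_distrib mult.commute)
  ultimately show ?thesis by linarith
qed

definition phase_neighbours :: "nat \<Rightarrow> real \<Rightarrow> nat set" where
  "phase_neighbours M w = {y. y < M \<and>
    (\<exists>k::int. \<bar>real y / real M - w - real_of_int k\<bar> < 1 / real M)}"

lemma rounding_in_phase_neighbours:
  assumes "M \<ge> 1" and "\<bar>real M * w - real_of_int n\<bar> < 1"
  defines "y \<equiv> nat (n mod int M)"
  shows "w - real y / real M = (real M * w - real_of_int n) / real M + real_of_int (n div int M)"
    and "y \<in> phase_neighbours M w"
proof -
  have M: "real M > 0" using assms(1) by simp
  have "int y = n mod int M" using assms(1) by (simp add: y_def)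
  also have "\<dots> = n - int M * (n div int M)" by (metis minus_div_mult_eq_mod mult.commute)
  finally have "int y = n - int M * (n div int M)" .
  then have "real y = real_of_int n - real M * real_of_int (n div int M)"
    by (metis of_int_diff of_int_mult of_int_of_nat_eq)
  then show shift: "w - real y / real M = (real M * w - real_of_int n) / real M
      + real_of_int (n div int M)"
    using M by (simp add: field_simps)
  have "real y / real M - w - real_of_int (- (n div int M))
      = - ((real M * w - real_of_int n) / real M)"
    using shift by simp
  then have "\<bar>real y / real M - w - real_of_int (- (n div int M))\<bar>
      = \<bar>real M * w - real_of_int n\<bar> / real M"
    using M by simp
  also have "\<dots> < 1 / real M" using assms(2) M by (simp add: divide_strict_right_mono)
  finally have "\<exists>k::int. \<bar>real y / real M - w - real_of_int k\<bar> < 1 / real M" by blast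
  moreover have "y < M" using assms(1) by (simp add: y_def nat_less_iff)
  ultimately show "y \<in> phase_neighbours M w" by (simp add: phase_neighbours_def)
qed

lemma sum_fejer_phase_neighbours_ge:
  assumes "M \<ge> 1" and "finite G" and "phase_neighbours M w \<subseteq> G"
  shows "8 / pi\<^sup>2 \<le> (\<Sum>y\<in>G. fejer M (2 * pi * (w - real y / real M)))"
proof -
  define F where "F y = fejer M (2 * pi * (w - real y / real M))" for y
  have sum_ge: "sum F H \<le> sum F G" if "H \<subseteq> phase_neighbours M w" for H
    using that assms by (intro sum_mono2) (auto simp: F_def fejer_nonneg)
  have "9 \<le> pi\<^sup>2" using pi_gt3 power_mono[of 3 pi 2] by simp
  then have le_1: "8 / pi\<^sup>2 \<le> 1" by simp
  define n where "n = \<lfloor>real M * w\<rfloor>"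
  define r where "r = real M * w - real_of_int n"
  have r: "0 \<le> r" "r < 1" unfolding r_def n_def by linarith+
  define y1 where "y1 = nat (n mod int M)"
  define y2 where "y2 = nat ((n + 1) mod int M)"
  have y1: "y1 \<in> phase_neighbours M w"
      "F y1 = fejer M (2 * pi * (r / real M + real_of_int (n div int M)))"
    using rounding_in_phase_neighbours[OF assms(1), of w n] r by (simp_all add: F_def r_def y1_def)
  show ?thesis
    \<comment> \<open>if \<open>M = 1\<close> the two roundings give the same outcome; if \<open>r = 0\<close> the first has mass 1\<close>
  proof (cases "M = 1 \<or> r = 0")
    case True
    have "F y1 = 1"
    proof (cases "M = 1")
      case False
      then show ?thesis using True y1(2) fejer_2pi_multiple[OF assms(1)] by simp
    qed (simp add: F_def fejer_def)
    then have "1 \<le> sum F G" using sum_ge[of "{y1}"] y1(1) by simp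
    then show ?thesis by (intro order_trans[OF le_1]) (simp add: F_def)
  next
    case False
    then have M: "M \<ge> 2" and "0 < r" using assms(1) r by auto
    have "\<bar>real M * w - real_of_int (n + 1)\<bar> < 1" using r \<open>0 < r\<close> by (simp add: r_def)
    note y2 = rounding_in_phase_neighbours[OF assms(1) this, folded y2_def]
    have "real M * w - real_of_int (n + 1) = r - 1" by (simp add: r_def)
    then have F2: "F y2 = fejer M (2 * pi * ((r - 1) / real M + real_of_int ((n + 1) div int M)))"
      unfolding F_def y2(1) by (simp only:)
    have "y1 \<noteq> y2"
    proof
      assume "y1 = y2"
      then have "n mod int M = (n + 1) mod int M" using M by (simp add: y1_def y2_def nat_eq_iff)
      then have "int M dvd 1" by (metis add_diff_cancel_left' mod_eq_dvd_iff)
      then show False using M by simp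
    qed
    then have "8 / pi\<^sup>2 \<le> sum F {y1, y2}"
      using fejer_rounding_pair_ge[OF assms(1) \<open>0 < r\<close> r(2)] y1(2) F2 by simp
    also have "\<dots> \<le> sum F G" using sum_ge y1(1) y2(2) by simp
    finally show ?thesis by (simp add: F_def)
  qed
qed

section \<open>Accuracy of the estimate\<close>

lemma sin_sq_add_diff_le:
  fixes a d :: real
  shows "\<bar>(sin (a + d))\<^sup>2 - (sin a)\<^sup>2\<bar> \<le> \<bar>sin (2 * a)\<bar> * \<bar>d\<bar> + d\<^sup>2"
proof -
  have "(sin (a + d))\<^sup>2 - (sin a)\<^sup>2 = (cos (2 * a) - cos (2 * a + 2 * d)) / 2"
    using cos_double_sin[of "a + d"] cos_double_sin[of a] by (simp add: distrib_left)
  also have "\<dots> = sin (2 * a + d) * sin d"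
    by (simp add: cos_diff_cos add_divide_distrib)
  finally have eq: "(sin (a + d))\<^sup>2 - (sin a)\<^sup>2 = sin (2 * a + d) * sin d" .
  have "\<bar>sin (2 * a + d) - sin (2 * a)\<bar> = 2 * \<bar>sin (d / 2)\<bar> * \<bar>cos ((4 * a + d) / 2)\<bar>"
    by (simp add: sin_diff_sin abs_mult add_divide_distrib)
  also have "\<dots> \<le> 2 * \<bar>d / 2\<bar> * 1"
    using abs_sin_x_le_abs_x[of "d / 2"] abs_cos_le_one by (intro mult_mono) auto
  finally have "\<bar>sin (2 * a + d)\<bar> \<le> \<bar>sin (2 * a)\<bar> + \<bar>d\<bar>" by simp
  then have "\<bar>sin (2 * a + d)\<bar> * \<bar>sin d\<bar> \<le> (\<bar>sin (2 * a)\<bar> + \<bar>d\<bar>) * \<bar>d\<bar>"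
    using abs_sin_x_le_abs_x[of d] by (intro mult_mono) auto
  then show ?thesis unfolding eq abs_mult by (simp add: algebra_simps power2_eq_square)
qed

lemma sin_sq_phase_neighbours:
  assumes "y \<in> phase_neighbours M w \<union> phase_neighbours M (- w)"
  obtains d where "\<bar>d\<bar> < pi / real M" and "(sin (pi * real y / real M))\<^sup>2 = (sin (pi * w + d))\<^sup>2"
proof -
  obtain v and k :: int where v: "v = w \<or> v = - w"
    and k: "\<bar>real y / real M - v - real_of_int k\<bar> < 1 / real M"
    using assms unfolding phase_neighbours_def by blast
  define e where "e = pi * (real y / real M - v - real_of_int k)"
  have e: "\<bar>e\<bar> < pi / real M"
    using mult_strict_left_mono[OF k pi_gt_zero] by (simp add: e_def abs_mult)
  have "(sin (pi * real y / real M))\<^sup>2 = (sin (pi * v + e + real_of_int k * pi))\<^sup>2"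
    by (simp add: e_def algebra_simps)
  then have sin_e: "(sin (pi * real y / real M))\<^sup>2 = (sin (pi * v + e))\<^sup>2"
    by (simp only: sin_sq_add_int_pi)
  from v show ?thesis
  proof
    assume "v = w"
    then show ?thesis using that e sin_e by blast
  next
    assume "v = - w"
    moreover have "sin (- (pi * w) + e) = - sin (pi * w + - e)"
      using sin_minus[of "pi * w + - e"] by simp
    ultimately show ?thesis using that[of "- e"] e sin_e by simp
  qed
qed

lemma count_output_near_phase:
  assumes "N \<ge> 1" and "real N \<le> (real M)\<^sup>2" and "0 \<le> t" and "t \<le> real N"
    and "y \<in> phase_neighbours M w \<union> phase_neighbours M (- w)"
    and "w = arcsin (sqrt (t / real N)) / pi"
  shows "\<bar>count_output N M y - t\<bar> \<le> 2 * pi * sqrt (t * (real N - t) / real N) + pi\<^sup>2"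
proof -
  define \<theta> where "\<theta> = pi * w"
  have N: "real N > 0" using assms(1) by simp
  have sin: "sin \<theta> = sqrt (t / real N)" and cos: "cos \<theta> = sqrt (1 - t / real N)"
    using sin_cos_arcsin_sqrt_ratio[OF N assms(3,4)] by (simp_all add: \<theta>_def assms(6))
  have "\<bar>sin (2 * \<theta>)\<bar> = 2 * sqrt (t / real N * (1 - t / real N))"
    unfolding sin_double sin cos using assms(3,4) N
    by (simp add: abs_mult real_sqrt_mult del: times_divide_eq_left)
  also have "t / real N * (1 - t / real N) = t * (real N - t) / (real N)\<^sup>2"
    using N by (simp add: field_simps power2_eq_square)
  finally have sin2: "real N * \<bar>sin (2 * \<theta>)\<bar> = 2 * sqrt (t * (real N - t))"
    using N by (simp add: real_sqrt_divide)
  obtain d where "\<bar>d\<bar> < pi / real M" and sin_y: "(sin (pi * real y / real M))\<^sup>2 = (sin (\<theta> + d))\<^sup>2"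
    using sin_sq_phase_neighbours[OF assms(5)] unfolding \<theta>_def by blast
  have "0 < sqrt (real N)" "sqrt (real N) \<le> real M"
    using N real_sqrt_le_mono[OF assms(2)] by simp_all
  moreover from this have "0 < real M" by linarith
  ultimately have d: "\<bar>d\<bar> \<le> pi / sqrt (real N)"
    using \<open>\<bar>d\<bar> < pi / real M\<close> by (intro order_trans[OF less_imp_le divide_left_mono]) auto
  have "count_output N M y - t = real N * ((sin (\<theta> + d))\<^sup>2 - (sin \<theta>)\<^sup>2)"
    using N assms(3) by (simp add: count_output_def sin_y sin right_diff_distrib)
  then have "\<bar>count_output N M y - t\<bar> = real N * \<bar>(sin (\<theta> + d))\<^sup>2 - (sin \<theta>)\<^sup>2\<bar>"
    by (simp add: abs_mult)
  also have "\<dots> \<le> real N * (\<bar>sin (2 * \<theta>)\<bar> * \<bar>d\<bar> + d\<^sup>2)"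
    using sin_sq_add_diff_le N by (intro mult_left_mono) auto
  also have "\<dots> = 2 * sqrt (t * (real N - t)) * \<bar>d\<bar> + real N * d\<^sup>2"
    using sin2 by (simp add: algebra_simps)
  also have "\<dots> \<le> 2 * sqrt (t * (real N - t)) * (pi / sqrt (real N))
      + real N * (pi / sqrt (real N))\<^sup>2"
    using d assms(3,4) power_mono[OF d, of 2]
    by (intro add_mono mult_left_mono) auto
  also have "\<dots> = 2 * pi * sqrt (t * (real N - t) / real N) + pi\<^sup>2"
    using N by (simp add: real_sqrt_divide power_divide)
  finally show ?thesis .
qed

lemma rounded_count_output_accurate:
  assumes "N \<ge> 1" and "real N \<le> (real M)\<^sup>2" and "0 \<le> t" and "t \<le> real N"
    and "y \<in> phase_neighbours M w \<union> phase_neighbours M (- w)"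
    and "w = arcsin (sqrt (t / real N)) / pi"
    and "\<bar>z - count_output N M y\<bar> \<le> 2 / 3"
  shows "\<bar>z - t\<bar> < 2 * pi * sqrt (t * (real N - t) / real N) + 11"
proof -
  have "\<bar>count_output N M y - t\<bar> \<le> 2 * pi * sqrt (t * (real N - t) / real N) + pi\<^sup>2"
    by (rule count_output_near_phase[OF assms(1-6)])
  moreover have "pi\<^sup>2 < 10"
    using mult_mono[OF pi_approx(2) pi_approx(2)] by (simp add: power2_eq_square)
  moreover have "\<bar>z - t\<bar> \<le> \<bar>z - count_output N M y\<bar> + \<bar>count_output N M y - t\<bar>"
    by linarith
  ultimately show ?thesis using assms(7) by linarith
qed

lemma nat_ceiling_sqrt_bounds:
  assumes "N \<ge> 1"
  shows "nat \<lceil>sqrt (real N)\<rceil> \<ge> 1" and "real N \<le> (real (nat \<lceil>sqrt (real N)\<rceil>))\<^sup>2"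
proof -
  have "1 \<le> sqrt (real N)" using assms by simp
  then show "nat \<lceil>sqrt (real N)\<rceil> \<ge> 1" by linarith
  have "sqrt (real N) \<le> real (nat \<lceil>sqrt (real N)\<rceil>)"
    using \<open>1 \<le> sqrt (real N)\<close> by linarith
  from power_mono[OF this, of 2] show "real N \<le> (real (nat \<lceil>sqrt (real N)\<rceil>))\<^sup>2" by simp
qed

theorem corollary1:
  fixes N :: nat and f :: "nat \<Rightarrow> nat" and tt :: "nat \<Rightarrow> int"
  assumes "N \<ge> 1"
    and "\<forall>x<N. f x \<in> {0, 1}"
    and "\<forall>y<nat \<lceil>sqrt (real N)\<rceil>.
           \<bar>real_of_int (tt y) - count_output N (nat \<lceil>sqrt (real N)\<rceil>) y\<bar> \<le> 2 / 3"
  shows "(\<Sum>y\<in>{y. y < nat \<lceil>sqrt (real N)\<rceil> \<and>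
            \<bar>real_of_int (tt y) - real (card {x. x < N \<and> f x = 1})\<bar>
              < 2 * pi * sqrt (real (card {x. x < N \<and> f x = 1}) * (real N - real (card {x. x < N \<and> f x = 1})) / real N) + 11}.
           count_prob N f (nat \<lceil>sqrt (real N)\<rceil>) y) \<ge> 8 / pi\<^sup>2"
proof -
  define M where "M = nat \<lceil>sqrt (real N)\<rceil>"
  define t where "t = real (card {x. x < N \<and> f x = 1})"
  define w where "w = arcsin (sqrt (t / real N)) / pi"
  define G where "G = {y. y < M \<and>
      \<bar>real_of_int (tt y) - t\<bar> < 2 * pi * sqrt (t * (real N - t) / real N) + 11}"
  have M: "M \<ge> 1" "real N \<le> (real M)\<^sup>2"
    using nat_ceiling_sqrt_bounds[OF assms(1)] by (simp_all add: M_def)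
  have t: "0 \<le> t" "t \<le> real N" using card_Collect_less_le by (simp_all add: t_def)
  have G: "phase_neighbours M v \<subseteq> G" if "v \<in> {w, - w}" for v
  proof
    fix y assume y: "y \<in> phase_neighbours M v"
    then have "y < M" by (simp add: phase_neighbours_def)
    then show "y \<in> G"
      using rounded_count_output_accurate[OF assms(1) M(2) t _ w_def] assms(3) y that
      by (auto simp: G_def M_def)
  qed
  have "8 / pi\<^sup>2 \<le> (\<Sum>y\<in>G. (fejer M (2 * pi * (w - real y / real M))
      + fejer M (2 * pi * (- w - real y / real M))) / 2)"
    using sum_fejer_phase_neighbours_ge[OF M(1) _ G, of w]
      sum_fejer_phase_neighbours_ge[OF M(1) _ G, of "- w"]
    by (simp add: G_def sum.distrib flip: sum_divide_distrib)
  also have "\<dots> = (\<Sum>y\<in>G. count_prob N f M y)"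
    using count_prob_eq_fejer[OF assms(1,2)] by (intro sum.cong) (auto simp: G_def w_def t_def)
  finally show ?thesis by (simp add: G_def M_def t_def)
qed

end
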